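(* Let $q$ be a prime power, $n=q^4-1$, and let $0\le a_2,a_3<q$ with $a_2+a_3<q-1$. Then the interlude $[(a_2,a_3,a_2,a_3),(a_2+1,a_3,a_2+1,a_3)]_M$ contains exactly $a_3(q-a_3)$ minimal representatives of SR-asymmetric cosets of cardinality $2$.
   Context: Identify $\mathbb{Z}_n$ with $\{0,\ldots,n-1\}$, all arithmetic modulo $n$. The $q$-adic 4-tuple $(a_0,a_1,a_2,a_3)$ denotes $a_0+a_1q+a_2q^2+a_3q^3$ with $0\le a_i<q$. The cyclotomic coset of $x$ with respect to $q^2$ is $I_x=\{x,\,q^2x\bmod n\}$; its minimal representative is its least element. The (Hermitian) reciprocal coset of $I_x$ is $I_{n-qx}$. $I_x$ is symmetric if $I_{n-qx}=I_x$ and asymmetric otherwise; for an asymmetric pair with minimal representatives $x<y$, $I_x$ is FR-asymmetric and $I_y$ is SR-asymmetric. For $0\le a<q-1$, $0\le b<q$, the interlude $[(a,b,a,b),(a+1,b,a+1,b)]_M$ is the set of integers $x$ with $(a,b,a,b)<x<(a+1,b,a+1,b)$ that are minimal representatives of a coset of cardinality $2$. *)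

theory Defs
  imports "HOL-Computational_Algebra.Primes"
begin

definition prime_power :: "nat \<Rightarrow> bool" where
  "prime_power q \<longleftrightarrow> (\<exists>p k. prime p \<and> k \<ge> 1 \<and> q = p ^ k)"

definition modn :: "nat \<Rightarrow> nat" where
  "modn q = q ^ 4 - 1"

definition qtuple :: "nat \<Rightarrow> nat \<Rightarrow> nat \<Rightarrow> nat \<Rightarrow> nat \<Rightarrow> nat" where
  "qtuple q a0 a1 a2 a3 = a0 + a1 * q + a2 * q ^ 2 + a3 * q ^ 3"

definition ccoset :: "nat \<Rightarrow> nat \<Rightarrow> nat set" where
  "ccoset q x = {x mod modn q, (q ^ 2 * x) mod modn q}"

definition is_min_rep :: "nat \<Rightarrow> nat \<Rightarrow> bool" where
  "is_min_rep q x \<longleftrightarrow> x < modn q \<and> x = Min (ccoset q x)"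

definition recip :: "nat \<Rightarrow> nat \<Rightarrow> nat" where
  "recip q x = (modn q - (q * x) mod modn q) mod modn q"

definition symmetric_coset :: "nat \<Rightarrow> nat \<Rightarrow> bool" where
  "symmetric_coset q x \<longleftrightarrow> ccoset q (recip q x) = ccoset q x"

definition SR_asymmetric :: "nat \<Rightarrow> nat \<Rightarrow> bool" where
  "SR_asymmetric q x \<longleftrightarrow> \<not> symmetric_coset q x \<and>
     Min (ccoset q (recip q x)) < Min (ccoset q x)"

end

theory Submission
  imports Defs
begin

text \<open>Write \<open>Q = q^2\<close>, so \<open>n = Q^2 - 1\<close>, and split \<open>x < n\<close> into base-\<open>Q\<close> digits \<open>x = A Q + B\<close>.
  Since \<open>Q^2 = 1\<close> modulo \<open>n\<close>, multiplication by \<open>q^2\<close> swaps the two digits, so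
  \<open>I_x = {A Q + B, B Q + A}\<close> and \<open>x\<close> is the minimal representative of a coset of size 2
  iff \<open>A < B\<close>; inside the interlude this forces \<open>A = c = a2 + a3 q\<close> and \<open>c < B\<close>.
  In base \<open>q\<close>, multiplication by \<open>q\<close> rotates the four digits and \<open>n - y\<close> replaces every
  digit \<open>d\<close> by \<open>q - 1 - d\<close>; comparing the minimum of the reciprocal coset with \<open>x\<close> shows
  that \<open>I_x\<close> is SR-asymmetric iff the units digit of \<open>B\<close> is at least \<open>q - a3\<close>.
  Counting \<open>B = b1 q + b0\<close> with \<open>a3 \<le> b1 < q\<close> and \<open>q - a3 \<le> b0 < q\<close> gives \<open>a3 (q - a3)\<close>.\<close>

lemma mult_add_less_mult_add_iff:
  fixes a b c d Q :: nat
  assumes "b < Q" "d < Q"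
  shows "a * Q + b < c * Q + d \<longleftrightarrow> a < c \<or> a = c \<and> b < d"
proof
  assume less: "a * Q + b < c * Q + d"
  have "a \<le> c"
  proof (rule ccontr)
    assume "\<not> a \<le> c"
    then have "Suc c * Q \<le> a * Q" by (intro mult_le_mono1) simp
    then show False using less assms by simp
  qed
  then show "a < c \<or> a = c \<and> b < d" using less by auto
next
  assume "a < c \<or> a = c \<and> b < d"
  then show "a * Q + b < c * Q + d"
  proof
    assume "a < c"
    then have "Suc a * Q \<le> c * Q" by (intro mult_le_mono1) simp
    then show ?thesis using assms by simp
  qed simp
qed

lemma mult_add_eq_mult_add_iff:
  fixes a b c d Q :: nat
  assumes "b < Q" "d < Q"
  shows "a * Q + b = c * Q + d \<longleftrightarrow> a = c \<and> b = d"
  using mult_add_less_mult_add_iff[OF assms, of a c] mult_add_less_mult_add_iff[OF assms(2,1), of c a]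
  by auto

lemma mult_add_less_mult:
  fixes a b m q :: nat
  assumes "a < m" "b < q"
  shows "a * q + b < m * q"
  using mult_add_less_mult_add_iff[of b q 0 a m] assms by simp

lemma Suc_modn: "1 \<le> q \<Longrightarrow> Suc (modn q) = q^2 * q^2"
  unfolding modn_def by (simp flip: power_add)

lemma modn_halves:
  assumes "1 \<le> q"
  shows "modn q = (q^2 - 1) * q^2 + (q^2 - 1)"
proof -
  have "0 < q^2" using assms by simp
  then show ?thesis using Suc_modn[OF assms] by (cases "q^2") simp_all
qed

lemma qtuple_halves: "qtuple q d0 d1 d2 d3 = (d3 * q + d2) * q^2 + (d1 * q + d0)"
  unfolding qtuple_def by (simp add: algebra_simps power2_eq_square power3_eq_cube)

lemma qtuple_add:
  "qtuple q a0 a1 a2 a3 + qtuple q b0 b1 b2 b3 = qtuple q (a0 + b0) (a1 + b1) (a2 + b2) (a3 + b3)"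
  unfolding qtuple_def by (simp add: algebra_simps)

lemma qtuple_max:
  assumes "1 \<le> q"
  shows "qtuple q (q - 1) (q - 1) (q - 1) (q - 1) = modn q"
proof -
  obtain p where "q = Suc p" using assms by (cases q) auto
  then show ?thesis unfolding qtuple_def modn_def by (simp add: numeral_eq_Suc algebra_simps)
qed

lemma swap_halves:
  fixes q A B :: nat
  assumes q: "1 \<le> q" and A: "A < q^2" and B: "B < q^2" and x: "A * q^2 + B < modn q"
  shows "B * q^2 + A < modn q" and "(q^2 * (A * q^2 + B)) mod modn q = B * q^2 + A"
proof -
  have top: "q^2 - 1 < q^2" using q by simp
  from x have "A < q^2 - 1 \<or> B < q^2 - 1"
    unfolding modn_halves[OF q] mult_add_less_mult_add_iff[OF B top] by auto
  then show less: "B * q^2 + A < modn q"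
    unfolding modn_halves[OF q] mult_add_less_mult_add_iff[OF A top] using A B by auto
  have "q^2 * (A * q^2 + B) = B * q^2 + A + A * modn q"
    using Suc_modn[OF q, symmetric] by (simp add: algebra_simps)
  then show "(q^2 * (A * q^2 + B)) mod modn q = B * q^2 + A" using less by simp
qed

lemma ccoset_halves:
  assumes "1 \<le> q" "A < q^2" "B < q^2" "A * q^2 + B < modn q"
  shows "ccoset q (A * q^2 + B) = {A * q^2 + B, B * q^2 + A}"
  unfolding ccoset_def using swap_halves[OF assms] assms(4) by simp

lemma recip_qtuple:
  assumes d: "d0 < q" "d1 < q" "d2 < q" "d3 < q"
    and pos: "0 < qtuple q d0 d1 d2 d3" and less: "qtuple q d0 d1 d2 d3 < modn q"
  shows "recip q (qtuple q d0 d1 d2 d3) = qtuple q (q-1-d3) (q-1-d0) (q-1-d1) (q-1-d2)"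
proof -
  let ?x = "qtuple q d0 d1 d2 d3"
  define y where "y = qtuple q d3 d0 d1 d2"
  define R where "R = qtuple q (q-1-d3) (q-1-d0) (q-1-d1) (q-1-d2)"
  have q: "1 \<le> q" using d by simp
  have "R + y = qtuple q (q - 1) (q - 1) (q - 1) (q - 1)"
    unfolding R_def y_def qtuple_add using d by simp
  then have complement: "R + y = modn q" using qtuple_max[OF q] by simp
  have "q * ?x + d3 = d3 * q^4 + y"
    unfolding y_def qtuple_def by (simp add: numeral_eq_Suc algebra_simps)
  then have rotate: "q * ?x = y + d3 * modn q"
    using Suc_modn[OF q, symmetric] by (simp add: algebra_simps)
  have "0 < y" using pos q unfolding y_def qtuple_def by auto
  have "R \<noteq> 0"
  proof
    assume "R = 0"
    then have "q-1-d3 = 0 \<and> q-1-d0 = 0 \<and> q-1-d1 = 0 \<and> q-1-d2 = 0"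
      unfolding R_def qtuple_def using q by simp
    then have "d0 = q - 1 \<and> d1 = q - 1 \<and> d2 = q - 1 \<and> d3 = q - 1"
      using d by auto
    then show False using less qtuple_max[OF q] by simp
  qed
  then have "y < modn q" using complement by simp
  then have "recip q ?x = (modn q - y) mod modn q"
    unfolding recip_def using rotate by simp
  also have "\<dots> = R mod modn q" unfolding complement[symmetric] by simp
  also have "\<dots> = R"
    using complement \<open>0 < y\<close> by simp
  finally show ?thesis unfolding R_def .
qed

lemma min_rep_card2_iff:
  assumes q: "1 \<le> q" and A: "A < q^2" and B: "B < q^2"
  shows "is_min_rep q (A * q^2 + B) \<and> card (ccoset q (A * q^2 + B)) = 2
    \<longleftrightarrow> A * q^2 + B < modn q \<and> A < B"
proof (cases "A * q^2 + B < modn q")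
  case True
  have "A * q^2 + B \<le> B * q^2 + A \<longleftrightarrow> A \<le> B"
    using mult_add_less_mult_add_iff[OF A B, of B A] by linarith
  moreover have "A * q^2 + B = B * q^2 + A \<longleftrightarrow> A = B"
    using mult_add_eq_mult_add_iff[OF B A, of A B] by auto
  ultimately show ?thesis
    unfolding is_min_rep_def ccoset_halves[OF q A B True] using True
    by (cases "A = B") (auto simp: min_def)
qed (simp add: is_min_rep_def)

lemma interlude_min_rep_iff:
  assumes q: "1 \<le> q" and c: "c + 1 < q^2"
  shows "c * q^2 + c < x \<and> x < (c + 1) * q^2 + (c + 1) \<and> is_min_rep q x \<and> card (ccoset q x) = 2
    \<longleftrightarrow> (\<exists>B. c < B \<and> B < q^2 \<and> x = c * q^2 + B)"
proof -
  define A B where "A = x div q^2" and "B = x mod q^2"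
  have x: "x = A * q^2 + B" unfolding A_def B_def by (rule div_mult_mod_eq[symmetric])
  have B: "B < q^2" unfolding B_def using q by simp
  have c': "c < q^2" "c + 1 < q^2" using c by simp_all
  show ?thesis
  proof
    assume xS: "c * q^2 + c < x \<and> x < (c + 1) * q^2 + (c + 1) \<and> is_min_rep q x \<and> card (ccoset q x) = 2"
    have "modn q < q^2 * q^2" using Suc_modn[OF q] by simp
    then have A: "A < q^2"
      unfolding A_def using xS is_min_rep_def by (simp add: less_mult_imp_div_less)
    have "A < B" using xS min_rep_card2_iff[OF q A B] x by simp
    moreover have "c < A \<or> c = A \<and> c < B" "A < c + 1 \<or> A = c + 1 \<and> B < c + 1"
      using xS mult_add_less_mult_add_iff[OF c'(1) B, of c A]
        mult_add_less_mult_add_iff[OF B c'(2), of A "c + 1"] x by simp_all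
    ultimately show "\<exists>B. c < B \<and> B < q^2 \<and> x = c * q^2 + B" using x B by auto
  next
    assume "\<exists>B. c < B \<and> B < q^2 \<and> x = c * q^2 + B"
    then obtain B where cB: "c < B" and B: "B < q^2" and x: "x = c * q^2 + B" by blast
    have top: "q^2 - 1 < q^2" using q by simp
    have "x < modn q"
      unfolding x modn_halves[OF q] mult_add_less_mult_add_iff[OF B top] using c by linarith
    then have "is_min_rep q x \<and> card (ccoset q x) = 2"
      using min_rep_card2_iff[OF q c'(1) B] cB x by simp
    moreover have "c * q^2 + c < x" "x < (c + 1) * q^2 + (c + 1)" using cB B x by simp_all
    ultimately show "c * q^2 + c < x \<and> x < (c + 1) * q^2 + (c + 1) \<and> is_min_rep q x \<and> card (ccoset q x) = 2"
      by simp
  qed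
qed

lemma SR_asymmetric_iff_Min_less: "SR_asymmetric q x \<longleftrightarrow> Min (ccoset q (recip q x)) < Min (ccoset q x)"
  unfolding SR_asymmetric_def symmetric_coset_def by auto

lemma SR_asymmetric_interlude_iff:
  fixes q a2 a3 B :: nat
  assumes a: "a2 + a3 < q - 1" and cB: "a3 * q + a2 < B" and B: "B < q^2"
  shows "SR_asymmetric q ((a3 * q + a2) * q^2 + B) \<longleftrightarrow> q - a3 \<le> B mod q"
proof -
  define c where "c = a3 * q + a2"
  define x where "x = c * q^2 + B"
  define d0 d1 where "d0 = B mod q" and "d1 = B div q"
  define H L where "H = (q-1-a2) * q + (q-1-d1)" and "L = (q-1-d0) * q + (q-1-a3)"
  have q: "1 \<le> q" using a by simp
  have d: "d0 < q" "d1 < q"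
    unfolding d0_def d1_def using q B by (simp_all add: less_mult_imp_div_less power2_eq_square)
  have HL: "H < q^2" "L < q^2"
    unfolding H_def L_def power2_eq_square using q by (simp_all add: mult_add_less_mult)
  have "c + 1 < q^2"
    unfolding c_def power2_eq_square using mult_add_less_mult[of a3 q "a2 + 1"] a by simp
  then have "is_min_rep q x"
    using interlude_min_rep_iff[OF q] cB B unfolding x_def c_def by blast
  then have x_less: "x < modn q" and x_min: "Min (ccoset q x) = x"
    unfolding is_min_rep_def by simp_all
  have x_digits: "x = qtuple q d0 d1 a2 a3"
    unfolding qtuple_halves x_def c_def d0_def d1_def by simp
  have "0 < x" unfolding x_def using cB by simp
  then have "recip q x = qtuple q (q-1-a3) (q-1-d0) (q-1-d1) (q-1-a2)"
    using recip_qtuple[of d0 q d1 a2 a3] d a x_less unfolding x_digits by simp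
  also have "\<dots> = H * q^2 + L"
    unfolding qtuple_halves H_def L_def ..
  moreover have "recip q x < modn q"
    unfolding recip_def using x_less by simp
  ultimately have recip_coset: "ccoset q (recip q x) = {H * q^2 + L, L * q^2 + H}"
    using ccoset_halves[OF q HL] by simp
  have "a2 < q" "a3 < q-1-a2" using a by linarith+
  then have "c < H"
    unfolding c_def H_def using mult_add_less_mult_add_iff[of a2 q "q-1-d1" a3 "q-1-a2"] by simp
  then have "x < H * q^2 + L"
    unfolding x_def using mult_add_less_mult_add_iff[OF B HL(2)] by simp
  moreover have "L \<noteq> c"
    unfolding c_def L_def using mult_add_eq_mult_add_iff[of "q-1-a3" q a2 "q-1-d0" a3] a by auto
  then have "L * q^2 + H < x \<longleftrightarrow> L < c"
    unfolding x_def using mult_add_less_mult_add_iff[OF HL(1) B, of L c] by auto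
  moreover have "L < c \<longleftrightarrow> q - a3 \<le> d0"
    unfolding c_def L_def using mult_add_less_mult_add_iff[of "q-1-a3" q a2 "q-1-d0" a3] a d by auto
  ultimately show ?thesis
    unfolding SR_asymmetric_iff_Min_less recip_coset x_min x_def[symmetric] c_def[symmetric] d0_def[symmetric]
    by (auto simp: min_def)
qed

lemma card_tail_units_digit_ge:
  fixes q a2 a3 :: nat
  assumes a: "a2 + a3 < q"
  shows "card {B. a3 * q + a2 < B \<and> B < q^2 \<and> q - a3 \<le> B mod q} = a3 * (q - a3)"
proof -
  let ?S = "{B. a3 * q + a2 < B \<and> B < q^2 \<and> q - a3 \<le> B mod q}"
  let ?T = "{a3..<q} \<times> {q - a3..<q}"
  let ?join = "\<lambda>(b1, b0). b1 * q + b0"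
  have member: "b1 * q + b0 \<in> ?S \<longleftrightarrow> (b1, b0) \<in> ?T" if b0: "b0 < q" for b0 b1
  proof -
    have "b1 * q + b0 < q^2 \<longleftrightarrow> b1 < q"
      using mult_add_less_mult_add_iff[OF b0, of 0 b1 q] b0 by (simp add: power2_eq_square)
    moreover have "q - a3 \<le> b0 \<Longrightarrow> a3 * q + a2 < b1 * q + b0 \<longleftrightarrow> a3 \<le> b1"
      using mult_add_less_mult_add_iff[OF _ b0, of a2 a3 b1] a by auto
    moreover have "(b1 * q + b0) mod q = b0" using b0 by simp
    ultimately show ?thesis using b0 by auto
  qed
  have "?S = ?join ` ?T"
  proof (intro set_eqI iffI)
    fix B assume B: "B \<in> ?S"
    have "B mod q < q" using a by simp
    then have "(B div q, B mod q) \<in> ?T" using member[of "B mod q" "B div q"] B by simp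
    then show "B \<in> ?join ` ?T" by (rule rev_image_eqI) simp
  next
    fix B assume "B \<in> ?join ` ?T"
    then obtain b1 b0 where "(b1, b0) \<in> ?T" and "B = b1 * q + b0" by auto
    then show "B \<in> ?S" using member by auto
  qed
  moreover have "inj_on ?join ?T"
    by (auto intro!: inj_onI simp: mult_add_eq_mult_add_iff)
  ultimately show ?thesis by (simp add: card_image)
qed

theorem mainTheorem15:
  fixes q a2 a3 :: nat
  assumes "prime_power q"
    and "a2 < q" and "a3 < q" and "a2 + a3 < q - 1"
  shows "card {x. qtuple q a2 a3 a2 a3 < x \<and> x < qtuple q (a2+1) a3 (a2+1) a3
              \<and> is_min_rep q x \<and> card (ccoset q x) = 2 \<and> SR_asymmetric q x}
         = a3 * (q - a3)"
proof -
  define c where "c = a3 * q + a2"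
  have q: "1 \<le> q" using assms(4) by linarith
  have c: "c + 1 < q^2"
    unfolding c_def power2_eq_square using mult_add_less_mult[of a3 q "a2 + 1"] assms(3,4) by simp
  have bounds: "qtuple q a2 a3 a2 a3 = c * q^2 + c" "qtuple q (a2+1) a3 (a2+1) a3 = (c + 1) * q^2 + (c + 1)"
    unfolding qtuple_halves c_def by simp_all
  let ?tails = "{B. c < B \<and> B < q^2 \<and> q - a3 \<le> B mod q}"
  have "qtuple q a2 a3 a2 a3 < x \<and> x < qtuple q (a2+1) a3 (a2+1) a3
          \<and> is_min_rep q x \<and> card (ccoset q x) = 2 \<and> SR_asymmetric q x
        \<longleftrightarrow> x \<in> (\<lambda>B. c * q^2 + B) ` ?tails" for x
    using interlude_min_rep_iff[OF q c, of x] SR_asymmetric_interlude_iff[OF assms(4)]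
    unfolding bounds c_def by auto
  then have "{x. qtuple q a2 a3 a2 a3 < x \<and> x < qtuple q (a2+1) a3 (a2+1) a3
              \<and> is_min_rep q x \<and> card (ccoset q x) = 2 \<and> SR_asymmetric q x}
        = (\<lambda>B. c * q^2 + B) ` ?tails"
    by blast
  moreover have "card ?tails = a3 * (q - a3)"
    unfolding c_def using card_tail_units_digit_ge assms(4) by simp
  ultimately show ?thesis by (simp add: card_image)
qed

end
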